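(* Let $PS$ be a finite set of propositional symbols and let $W = \{\langle \phi_1, k_1\rangle, \ldots, \langle \phi_n, k_n\rangle\}$ be a weighted base over $PS$. Let ${\it holds}_1, \ldots, {\it holds}_n$ be pairwise distinct symbols of $PS \setminus Var(W)$. Define $H = \{\langle \phi_i, +\infty\rangle \mid \langle \phi_i, +\infty\rangle \in W\}$ and $S = \{\langle {\it holds}_i \Rightarrow \phi_i, +\infty\rangle, \langle {\it holds}_i, k_i\rangle \mid \langle \phi_i, k_i\rangle \in W,\ k_i \neq +\infty\}$, and let $W{\downarrow} = H \cup S$. Then $W{\downarrow}$ is a weighted base in normal form. Moreover, $K_W(\alpha) = K_{W{\downarrow}}(\alpha)$ for every formula $\alpha \in PROP_{Var(W)}$, and hence $W{\downarrow}$ is $Var(W)$-equivalent to $W$.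
   Context: $PROP_{V}$ denotes the propositional formulas built from symbols in $V$, the constants $true,false$ and $\neg,\wedge,\vee$; $Var(\phi)$ is the set of symbols occurring in $\phi$. Worlds are the interpretations $\omega \in \Omega = 2^{PS}$. A weighted base is a finite set $W=\{\langle \phi_1,k_1\rangle,\ldots,\langle\phi_n,k_n\rangle\}$ where each $\phi_i\in PROP_{PS}$ and each weight $k_i$ is a positive integer or $+\infty$; $Var(W)=\bigcup_i Var(\phi_i)$. The weight of a world is $K_W(\omega)=\sum_{\langle\phi_i,k_i\rangle\in W,\ \omega\models\neg\phi_i} k_i$, and for a formula $\alpha$, $K_W(\alpha)=\min_{\omega\models\alpha}K_W(\omega)$. Skeptical inference: $\alpha \mid\!\sim_W \beta$ iff every world of minimal $K_W$-weight among the models of $\alpha$ is a model of $\beta$. $W$ is in normal form iff for every $i$, either $k_i=+\infty$ or $\phi_i$ is a propositional symbol. For $V\subseteq PS$, two weighted bases $W_1,W_2$ are $V$-equivalent iff for all $\alpha,\beta\in PROP_V$, $\alpha\mid\!\sim_{W_1}\beta$ holds exactly when $\alpha\mid\!\sim_{W_2}\beta$ holds. *)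

theory Defs
  imports "HOL-Library.Extended_Nat"
begin

datatype 'v form = Atom 'v | TT | FF | Neg "'v form" | Conj "'v form" "'v form" | Disj "'v form" "'v form"

fun Var :: "'v form \<Rightarrow> 'v set" where
  "Var (Atom p) = {p}"
| "Var TT = {}"
| "Var FF = {}"
| "Var (Neg f) = Var f"
| "Var (Conj f g) = Var f \<union> Var g"
| "Var (Disj f g) = Var f \<union> Var g"

definition Imp :: "'v form \<Rightarrow> 'v form \<Rightarrow> 'v form" where
  "Imp f g = Disj (Neg f) g"

text \<open>A world (interpretation) is represented by the set of symbols it makes true.\<close>
fun sat :: "'v set \<Rightarrow> 'v form \<Rightarrow> bool" where
  "sat w (Atom p) = (p \<in> w)"
| "sat w TT = True"
| "sat w FF = False"
| "sat w (Neg f) = (\<not> sat w f)"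
| "sat w (Conj f g) = (sat w f \<and> sat w g)"
| "sat w (Disj f g) = (sat w f \<or> sat w g)"

text \<open>Weights: positive integers or infinity, i.e. nonzero elements of enat.\<close>
type_synonym 'v wbase = "('v form \<times> enat) set"

definition weighted_base :: "'v set \<Rightarrow> 'v wbase \<Rightarrow> bool" where
  "weighted_base PS W \<longleftrightarrow> finite W \<and> (\<forall>(f, k) \<in> W. Var f \<subseteq> PS \<and> k \<noteq> 0)"

definition VarW :: "'v wbase \<Rightarrow> 'v set" where
  "VarW W = (\<Union>(f, k) \<in> W. Var f)"

definition normal_form :: "'v wbase \<Rightarrow> bool" where
  "normal_form W \<longleftrightarrow> (\<forall>(f, k) \<in> W. k = \<infinity> \<or> (\<exists>p. f = Atom p))"

definition worlds :: "'v set \<Rightarrow> 'v set set" where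
  "worlds PS = Pow PS"

definition Kw :: "'v wbase \<Rightarrow> 'v set \<Rightarrow> enat" where
  "Kw W w = (\<Sum>(f, k) \<in> W. if sat w f then 0 else k)"

text \<open>Weight of a formula: minimum over its models (infinity if it has none).\<close>
definition Kf :: "'v set \<Rightarrow> 'v wbase \<Rightarrow> 'v form \<Rightarrow> enat" where
  "Kf PS W a = (INF w \<in> {w \<in> worlds PS. sat w a}. Kw W w)"

definition infers :: "'v set \<Rightarrow> 'v wbase \<Rightarrow> 'v form \<Rightarrow> 'v form \<Rightarrow> bool" where
  "infers PS W a b \<longleftrightarrow>
     (\<forall>w \<in> worlds PS. sat w a \<and> Kw W w = Kf PS W a \<longrightarrow> sat w b)"

definition V_equivalent :: "'v set \<Rightarrow> 'v set \<Rightarrow> 'v wbase \<Rightarrow> 'v wbase \<Rightarrow> bool" where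
  "V_equivalent PS V W1 W2 \<longleftrightarrow>
     (\<forall>a b. Var a \<subseteq> V \<and> Var b \<subseteq> V \<longrightarrow> (infers PS W1 a b \<longleftrightarrow> infers PS W2 a b))"

end

theory Submission
  imports Defs "HOL-Library.Disjoint_Sets"
begin

text \<open>
  The weight of a world depends only on the symbols of the base. A soft clause
  \<open>\<langle>\<phi>, k\<rangle>\<close> is replaced by the hard clause \<open>holds \<Rightarrow> \<phi>\<close> and the soft atom
  \<open>\<langle>holds, k\<rangle>\<close>; every world pays at least as much in \<open>W\<down>\<close> as in \<open>W\<close>, and
  switching each fresh symbol \<open>holds\<^sub>i\<close> on exactly when \<open>\<phi>\<^sub>i\<close> is true changes no
  symbol of \<open>Var(W)\<close> and makes the two weights equal. Hence minima over the
  models of a formula on \<open>Var(W)\<close> coincide, and the W_infers models of \<open>W\<close> are the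
  restrictions of those of \<open>W\<down>\<close>, which gives \<open>Var(W)\<close>-equivalence.
\<close>

lemma sat_cong: "Var f \<subseteq> V \<Longrightarrow> w \<inter> V = w' \<inter> V \<Longrightarrow> sat w f = sat w' f"
  by (induction f) auto

lemma Kw_cong:
  assumes "w \<inter> VarW W = w' \<inter> VarW W"
  shows "Kw W w = Kw W w'"
  unfolding Kw_def using sat_cong[OF _ assms]
  by (intro sum.cong) (auto simp: VarW_def split: prod.splits)

lemma Kw_image:
  assumes "inj_on c I"
  shows "Kw (c ` I) w = (\<Sum>i\<in>I. Kw {c i} w)"
  unfolding Kw_def using assms by (simp add: sum.reindex)

lemma Kw_UN_disjoint:
  assumes "finite I" "\<And>i. i \<in> I \<Longrightarrow> finite (D i)" "disjoint_family_on D I"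
  shows "Kw (\<Union>i\<in>I. D i) w = (\<Sum>i\<in>I. Kw (D i) w)"
  unfolding Kw_def using assms by (subst sum.UNION_disjoint) (auto simp: disjoint_family_on_def)

definition conservative_extension :: "'v set \<Rightarrow> 'v set \<Rightarrow> 'v wbase \<Rightarrow> 'v wbase \<Rightarrow> bool" where
  "conservative_extension PS V W W' \<longleftrightarrow>
     (\<forall>w \<in> worlds PS. Kw W w \<le> Kw W' w
        \<and> (\<exists>w' \<in> worlds PS. w' \<inter> V = w \<inter> V \<and> Kw W' w' = Kw W w))"

lemma Kf_conservative_extension:
  assumes ext: "conservative_extension PS V W W'" and "Var a \<subseteq> V"
  shows "Kf PS W a = Kf PS W' a"
proof (rule antisym)
  show "Kf PS W a \<le> Kf PS W' a"
    unfolding Kf_def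
  proof (rule INF_mono)
    fix w assume w: "w \<in> {w \<in> worlds PS. sat w a}"
    then have "Kw W w \<le> Kw W' w"
      using ext by (simp add: conservative_extension_def)
    with w show "\<exists>w' \<in> {w \<in> worlds PS. sat w a}. Kw W w' \<le> Kw W' w"
      by blast
  qed
  show "Kf PS W' a \<le> Kf PS W a"
    unfolding Kf_def
  proof (rule INF_mono)
    fix w assume w: "w \<in> {w \<in> worlds PS. sat w a}"
    then obtain w' where w': "w' \<in> worlds PS" "w' \<inter> V = w \<inter> V" "Kw W' w' = Kw W w"
      using ext by (auto simp: conservative_extension_def)
    have "sat w' a"
      using w sat_cong[OF \<open>Var a \<subseteq> V\<close> w'(2)] by simp
    with w' show "\<exists>w' \<in> {w \<in> worlds PS. sat w a}. Kw W' w' \<le> Kw W w"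
      by (intro bexI[of _ w']) simp_all
  qed
qed

lemma V_equivalent_conservative_extension:
  assumes ext: "conservative_extension PS V W W'"
  shows "V_equivalent PS V W' W"
  unfolding V_equivalent_def
proof (intro allI impI)
  fix a b assume ab: "Var a \<subseteq> V \<and> Var b \<subseteq> V"
  then have Kf_eq: "Kf PS W a = Kf PS W' a"
    using Kf_conservative_extension[OF ext] by blast
  show "infers PS W' a b \<longleftrightarrow> infers PS W a b"
  proof
    assume W'_infers: "infers PS W' a b"
    show "infers PS W a b"
      unfolding infers_def
    proof (intro ballI impI)
      fix w assume w: "w \<in> worlds PS" "sat w a \<and> Kw W w = Kf PS W a"
      then obtain w' where w': "w' \<in> worlds PS" "w' \<inter> V = w \<inter> V" "Kw W' w' = Kw W w"
        using ext by (auto simp: conservative_extension_def)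
      have "sat w' a"
        using sat_cong[of a V w' w] ab w' w by simp
      then have "sat w' b"
        using W'_infers w' w Kf_eq by (auto simp: infers_def)
      then show "sat w b"
        using sat_cong[of b V w' w] ab w' by simp
    qed
  next
    assume W_infers: "infers PS W a b"
    show "infers PS W' a b"
      unfolding infers_def
    proof (intro ballI impI)
      fix w assume w: "w \<in> worlds PS" "sat w a \<and> Kw W' w = Kf PS W' a"
      have "Kf PS W a \<le> Kw W w"
        unfolding Kf_def using w by (intro INF_lower) auto
      moreover have "Kw W w \<le> Kw W' w"
        using ext w by (auto simp: conservative_extension_def)
      ultimately have "Kw W w = Kf PS W a"
        using w Kf_eq by auto
      then show "sat w b"
        using W_infers w by (auto simp: infers_def)
    qed
  qed
qed

definition normalize_clause :: "'v \<Rightarrow> 'v form \<times> enat \<Rightarrow> 'v wbase" where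
  "normalize_clause h c =
     (if snd c = \<infinity> then {c} else {(Imp (Atom h) (fst c), \<infinity>), (Atom h, snd c)})"

lemma finite_normalize_clause: "finite (normalize_clause h c)"
  by (simp add: normalize_clause_def)

lemma Kw_le_Kw_normalize_clause: "Kw {c} w \<le> Kw (normalize_clause h c) w"
  by (cases c) (auto simp: normalize_clause_def Kw_def Imp_def)

lemma Kw_normalize_clause:
  assumes "h \<in> w \<longleftrightarrow> sat w (fst c)"
  shows "Kw (normalize_clause h c) w = Kw {c} w"
  using assms by (cases c) (auto simp: normalize_clause_def Kw_def Imp_def)

lemma disjoint_family_normalize_clause:
  assumes "inj_on c I" "inj_on h I" "\<And>i j. i \<in> I \<Longrightarrow> j \<in> I \<Longrightarrow> h i \<notin> Var (fst (c j))"
  shows "disjoint_family_on (\<lambda>i. normalize_clause (h i) (c i)) I"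
  unfolding disjoint_family_on_def
proof (intro ballI impI)
  fix i j assume ij: "i \<in> I" "j \<in> I" "i \<noteq> j"
  then have "c i \<noteq> c j" "h i \<noteq> h j"
    using assms(1,2) by (auto dest: inj_onD)
  moreover have "h i \<notin> Var (fst (c j))" "h j \<notin> Var (fst (c i))"
    using assms(3) ij by auto
  ultimately show "normalize_clause (h i) (c i) \<inter> normalize_clause (h j) (c j) = {}"
    unfolding normalize_clause_def Imp_def
    by (simp split: if_splits) (metis Var.simps(1,4,6) UnCI insertI1 fst_conv)
qed

lemma conservative_extension_normalize:
  assumes "finite I" "inj_on c I" "inj_on h I" "h ` I \<subseteq> PS - VarW (c ` I)"
  shows "conservative_extension PS (VarW (c ` I)) (c ` I) (\<Union>i\<in>I. normalize_clause (h i) (c i))"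
    (is "conservative_extension PS ?V ?W ?Wd")
  unfolding conservative_extension_def
proof (intro ballI conjI)
  have Var_c: "Var (fst (c i)) \<subseteq> ?V" if "i \<in> I" for i
    using that by (force simp: VarW_def)
  have disjoint: "disjoint_family_on (\<lambda>i. normalize_clause (h i) (c i)) I"
    using assms Var_c by (intro disjoint_family_normalize_clause) blast+
  have Kw_Wd: "Kw ?Wd w = (\<Sum>i\<in>I. Kw (normalize_clause (h i) (c i)) w)" for w
    by (rule Kw_UN_disjoint[OF \<open>finite I\<close> finite_normalize_clause disjoint])
  note Kw_sums = Kw_Wd Kw_image[OF \<open>inj_on c I\<close>]
  fix w assume w: "w \<in> worlds PS"
  show "Kw ?W w \<le> Kw ?Wd w"
    unfolding Kw_sums by (intro sum_mono Kw_le_Kw_normalize_clause)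
  define w' where "w' = (w - h ` I) \<union> h ` {i \<in> I. sat w (fst (c i))}"
  have "w' \<in> worlds PS"
    using w assms(4) by (auto simp: w'_def worlds_def)
  moreover have agree: "w' \<inter> ?V = w \<inter> ?V"
    using assms(4) by (auto simp: w'_def)
  moreover have "Kw ?Wd w' = Kw ?W w"
  proof -
    have "h i \<in> w' \<longleftrightarrow> sat w' (fst (c i))" if "i \<in> I" for i
      using that sat_cong[OF Var_c[OF that] agree] \<open>inj_on h I\<close>
      by (auto simp: w'_def dest: inj_onD)
    then have "Kw ?Wd w' = Kw ?W w'"
      unfolding Kw_sums by (intro sum.cong refl Kw_normalize_clause)
    also have "\<dots> = Kw ?W w"
      using agree by (intro Kw_cong) simp
    finally show ?thesis .
  qed
  ultimately show "\<exists>w' \<in> worlds PS. w' \<inter> ?V = w \<inter> ?V \<and> Kw ?Wd w' = Kw ?W w"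
    by blast
qed

lemma weighted_base_normalize:
  assumes "weighted_base PS (c ` I)" "finite I" "h ` I \<subseteq> PS"
  shows "weighted_base PS (\<Union>i\<in>I. normalize_clause (h i) (c i))"
  unfolding weighted_base_def
proof (intro conjI ballI)
  show "finite (\<Union>i\<in>I. normalize_clause (h i) (c i))"
    using \<open>finite I\<close> by (simp add: finite_normalize_clause)
  fix x assume "x \<in> (\<Union>i\<in>I. normalize_clause (h i) (c i))"
  then obtain i where i: "i \<in> I" "x \<in> normalize_clause (h i) (c i)"
    by blast
  have "Var (fst (c i)) \<subseteq> PS" "snd (c i) \<noteq> 0" "h i \<in> PS"
    using assms i(1) unfolding weighted_base_def by fastforce+
  with i(2) show "case x of (f, k) \<Rightarrow> Var f \<subseteq> PS \<and> k \<noteq> 0"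
    by (auto simp: normalize_clause_def Imp_def split: if_splits)
qed

lemma normal_form_normalize: "normal_form (\<Union>i\<in>I. normalize_clause (h i) (c i))"
  by (auto simp: normal_form_def normalize_clause_def) (metis snd_conv)

theorem proposition3p1:
  fixes PS :: "'v set" and n :: nat and phi :: "nat \<Rightarrow> 'v form" and k :: "nat \<Rightarrow> enat"
    and holds :: "nat \<Rightarrow> 'v" and W Wd :: "'v wbase"
  assumes "finite PS"
    and W_def: "W = (\<lambda>i. (phi i, k i)) ` {..<n}"
    and "inj_on (\<lambda>i. (phi i, k i)) {..<n}"
    and "weighted_base PS W"
    and "inj_on holds {..<n}"
    and "\<forall>i<n. holds i \<in> PS - VarW W"
    and Wd_def: "Wd = {(phi i, \<infinity>) | i. i < n \<and> k i = \<infinity>}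
              \<union> ({(Imp (Atom (holds i)) (phi i), \<infinity>) | i. i < n \<and> k i \<noteq> \<infinity>}
                 \<union> {(Atom (holds i), k i) | i. i < n \<and> k i \<noteq> \<infinity>})"
  shows "weighted_base PS Wd \<and> normal_form Wd
       \<and> (\<forall>a. Var a \<subseteq> VarW W \<longrightarrow> Kf PS W a = Kf PS Wd a)
       \<and> V_equivalent PS (VarW W) Wd W"
proof -
  have Wd_UN: "Wd = (\<Union>i<n. normalize_clause (holds i) (phi i, k i))"
    unfolding Wd_def normalize_clause_def by auto
  have holds_fresh: "holds ` {..<n} \<subseteq> PS - VarW W"
    using assms(6) by auto
  have ext: "conservative_extension PS (VarW W) W Wd"
    using conservative_extension_normalize[OF _ assms(3,5)] holds_fresh
    unfolding W_def Wd_UN by simp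
  have "weighted_base PS Wd"
    using weighted_base_normalize[of PS _ "{..<n}" holds] assms(4) holds_fresh
    unfolding W_def Wd_UN by auto
  then show ?thesis
    using normal_form_normalize[of holds "\<lambda>i. (phi i, k i)" "{..<n}"] Kf_conservative_extension[OF ext]
      V_equivalent_conservative_extension[OF ext]
    unfolding Wd_UN by blast
qed

end
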